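(* Fix $t\ge1$ and suppose (A1), (A3), (A4'), (A5') hold (the latter two for all $s\in[0:t-1]$), and that the maps $\mathsf P_{s;\ell}$ and $x\mapsto\partial_1\mathsf L_{s;k}(x,y)$ are differentiable so that the estimators below are defined. Then there is $c_t=c_t(t)>1$ such that, deterministically, $$\|\hat{\bm\tau}^{[t]}\|_{\mathrm{op}}\vee\|\hat{\bm\rho}^{[t]}\|_{\mathrm{op}}\le(K\Lambda)^{c_t}.$$
   Context: Notation: $[a:b]=\{a,\dots,b\}$, $[n]=[1:n]$; $\|\cdot\|_{\mathrm{op}}$ spectral norm, $\|f\|_{\mathrm{Lip}}$ Lipschitz constant; $\mathrm{diag}(\cdot)$ diagonal matrix. For $M\in\mathbb R^{(t-1)\times(t-1)}$, $\mathfrak O_t(M)\in\mathbb R^{t\times t}$ has $(\mathfrak O_t(M))_{r,s}=M_{r-1,s}$ for $r\in[2:t],s\in[1:t-1]$, other entries $0$; $\mathfrak O_1(\emptyset)=0$. Setting: $m,n\ge1$, $\phi=m/n$; $A\in\mathbb R^{m\times n}$ (any matrix) with rows $A_k^\top$; $\mu_\ast,\mu^{(0)}\in\mathbb R^n$, $\xi\in\mathbb R^m$; measurable $\mathcal F:\mathbb R^2\to\mathbb R$, $Y_k=\mathcal F(\langle A_k,\mu_\ast\rangle,\xi_k)$. Step sizes $\eta_s>0$; $\mathsf L_{s;k}:\mathbb R^2\to\mathbb R$ ($s\ge0$; $\partial_1,\partial_{11}$ derivatives in first argument), $\mathsf P_{s;\ell}:\mathbb R\to\mathbb R$ ($s\ge1$);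 $\partial_1\mathsf L_s(x,y)=(\partial_1\mathsf L_{s;k}(x_k,y_k))_k$, $\mathsf P_s(x)=(\mathsf P_{s;\ell}(x_\ell))_\ell$; $\mu^{(t)}=\mathsf P_t(\mu^{(t-1)}-\eta_{t-1}A^\top\partial_1\mathsf L_{t-1}(A\mu^{(t-1)},Y))$. Conditions ($K,\Lambda\ge2$): (A1) $1/K\le\phi\le K$; (A3) $\max_{s\in[0:t-1]}\eta_s\le\Lambda$; (A4') $\max_\ell\{|\mathsf P_{s+1;\ell}(0)|\vee\|\mathsf P_{s+1;\ell}\|_{\mathrm{Lip}}\}\le\Lambda$; (A5') $\max_k\{|\partial_1\mathsf L_{s;k}(0,\mathcal F(0,\xi_k))|\vee\|(u_1,u_2)\mapsto\partial_1\mathsf L_{s;k}(u_1,\mathcal F(u_2,\xi_k))\|_{\mathrm{Lip}}\}\le\Lambda$. Estimators (gradient descent inference algorithm): $\hat{\bm\rho}^{[0]}=\hat{\bm\rho}^{[0]}_\ell=\emptyset$; for $t\ge1$: $\hat{\bm L}^{[t]}_k=\mathrm{diag}(\{-\eta_{s-1}\partial_{11}\mathsf L_{s-1;k}((A\mu^{(s-1)})_k,Y_k)\}_{s\in[1:t]})$, $\hat{\bm\tau}^{[t]}_k=\phi[I_t-\hat{\bm L}^{[t]}_k\mathfrak O_t(\hat{\bm\rho}^{[t-1]})]^{-1}\hat{\bm L}^{[t]}_k$, $\hat{\bm\tau}^{[t]}=\frac1m\sum_k\hat{\bm\tau}^{[t]}_k$; $\hat{\bm P}^{[t]}_\ell=\mathrm{diag}(\{\mathsf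 P'_{s;\ell}((\mu^{(s-1)}-\eta_{s-1}A^\top\partial_1\mathsf L_{s-1}(A\mu^{(s-1)},Y))_\ell)\}_{s\in[1:t]})$, $\hat{\bm\rho}^{[t]}_\ell=\hat{\bm P}^{[t]}_\ell[I_t+(\hat{\bm\tau}^{[t]}+I_t)\mathfrak O_t(\hat{\bm\rho}^{[t-1]}_\ell)]$, $\hat{\bm\rho}^{[t]}=\frac1n\sum_\ell\hat{\bm\rho}^{[t]}_\ell$. *)

theory Defs
  imports "HOL-Analysis.Analysis" "Jordan_Normal_Form.Matrix"
begin

definition matvec :: "(nat \<Rightarrow> nat \<Rightarrow> real) \<Rightarrow> nat \<Rightarrow> (nat \<Rightarrow> real) \<Rightarrow> nat \<Rightarrow> real" where
  "matvec A n x k = (\<Sum>j<n. A k j * x j)"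

definition tmatvec :: "(nat \<Rightarrow> nat \<Rightarrow> real) \<Rightarrow> nat \<Rightarrow> (nat \<Rightarrow> real) \<Rightarrow> nat \<Rightarrow> real" where
  "tmatvec A m y l = (\<Sum>k<m. A k l * y k)"

definition op_norm :: "real mat \<Rightarrow> real" where
  "op_norm M = Sup {sqrt ((M *\<^sub>v x) \<bullet> (M *\<^sub>v x)) | x. x \<in> carrier_vec (dim_col M) \<and> x \<bullet> x \<le> 1}"

definition inv_mat :: "real mat \<Rightarrow> real mat" where
  "inv_mat M = (THE B. B \<in> carrier_mat (dim_row M) (dim_row M) \<and> M * B = 1\<^sub>m (dim_row M) \<and> B * M = 1\<^sub>m (dim_row M))"

text \<open>The shift operator O_t: (O_t(M))_{r,s} = M_{r-1,s} for r in [2:t], s in [1:t-1]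
  (1-based), all other entries 0. In 0-based indices: rows i in [1,t-1], cols j in [0,t-2].\<close>
definition shiftO :: "nat \<Rightarrow> real mat \<Rightarrow> real mat" where
  "shiftO t M = mat t t (\<lambda>(i, j). if 1 \<le> i \<and> j + 1 < t then M $$ (i - 1, j) else 0)"

text \<open>diag(d 1, ..., d t) (argument of d is the 1-based index s).\<close>
definition diag_mat :: "nat \<Rightarrow> (nat \<Rightarrow> real) \<Rightarrow> real mat" where
  "diag_mat t d = mat t t (\<lambda>(i, j). if i = j then d (i + 1) else 0)"

definition d1 :: "(real \<Rightarrow> real \<Rightarrow> real) \<Rightarrow> real \<Rightarrow> real \<Rightarrow> real" where
  "d1 f x y = deriv (\<lambda>u. f u y) x"

definition d11 :: "(real \<Rightarrow> real \<Rightarrow> real) \<Rightarrow> real \<Rightarrow> real \<Rightarrow> real" where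
  "d11 f x y = deriv (\<lambda>u. d1 f u y) x"

text \<open>mu^{(s)}; Lf s k = L_{s;k}, Pf s l = P_{s;l}, eta s = eta_s.\<close>
fun gd_mu :: "(nat \<Rightarrow> nat \<Rightarrow> real) \<Rightarrow> nat \<Rightarrow> nat \<Rightarrow> (nat \<Rightarrow> real) \<Rightarrow> (nat \<Rightarrow> real)
    \<Rightarrow> (nat \<Rightarrow> nat \<Rightarrow> real \<Rightarrow> real \<Rightarrow> real) \<Rightarrow> (nat \<Rightarrow> nat \<Rightarrow> real \<Rightarrow> real)
    \<Rightarrow> (nat \<Rightarrow> real) \<Rightarrow> nat \<Rightarrow> nat \<Rightarrow> real" where
  "gd_mu A m n Y eta Lf Pf mu0 0 = mu0"
| "gd_mu A m n Y eta Lf Pf mu0 (Suc s) =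
     (let mu = gd_mu A m n Y eta Lf Pf mu0 s in
      (\<lambda>l. Pf (Suc s) l (mu l - eta s *
           tmatvec A m (\<lambda>k. d1 (Lf s k) (matvec A n mu k) (Y k)) l)))"

definition gd_pre :: "(nat \<Rightarrow> nat \<Rightarrow> real) \<Rightarrow> nat \<Rightarrow> nat \<Rightarrow> (nat \<Rightarrow> real) \<Rightarrow> (nat \<Rightarrow> real)
    \<Rightarrow> (nat \<Rightarrow> nat \<Rightarrow> real \<Rightarrow> real \<Rightarrow> real) \<Rightarrow> (nat \<Rightarrow> nat \<Rightarrow> real \<Rightarrow> real)
    \<Rightarrow> (nat \<Rightarrow> real) \<Rightarrow> nat \<Rightarrow> nat \<Rightarrow> real" where
  "gd_pre A m n Y eta Lf Pf mu0 s l =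
     (let mu = gd_mu A m n Y eta Lf Pf mu0 s in
      mu l - eta s * tmatvec A m (\<lambda>k. d1 (Lf s k) (matvec A n mu k) (Y k)) l)"

text \<open>Given diagonal entries lf k s (entries of L-hat_k, s in [1:t]) and pf l s
  (entries of P-hat_l), compute rho-hat^{[t]}_l for all l.\<close>

definition avg_mat :: "nat \<Rightarrow> nat \<Rightarrow> (nat \<Rightarrow> real mat) \<Rightarrow> real mat" where
  "avg_mat t N f = mat t t (\<lambda>ij. (1 / real N) * (\<Sum>i<N. f i $$ ij))"

definition tau_k :: "nat \<Rightarrow> real \<Rightarrow> (nat \<Rightarrow> nat \<Rightarrow> real) \<Rightarrow> real mat \<Rightarrow> nat \<Rightarrow> real mat" where
  "tau_k t phi lf rhobar_prev k =
     phi \<cdot>\<^sub>m (inv_mat (1\<^sub>m t - diag_mat t (lf k) * shiftO t rhobar_prev) * diag_mat t (lf k))"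

fun rho_all :: "nat \<Rightarrow> nat \<Rightarrow> real \<Rightarrow> (nat \<Rightarrow> nat \<Rightarrow> real) \<Rightarrow> (nat \<Rightarrow> nat \<Rightarrow> real)
    \<Rightarrow> nat \<Rightarrow> nat \<Rightarrow> real mat" where
  "rho_all m n phi lf pf 0 = (\<lambda>l. 0\<^sub>m 0 0)"
| "rho_all m n phi lf pf (Suc t) =
     (let rl = rho_all m n phi lf pf t;
          rb = avg_mat t n rl;
          tau = avg_mat (Suc t) m (tau_k (Suc t) phi lf rb) in
      (\<lambda>l. diag_mat (Suc t) (pf l) *
             (1\<^sub>m (Suc t) + (tau + 1\<^sub>m (Suc t)) * shiftO (Suc t) (rl l))))"

definition rho_hat :: "nat \<Rightarrow> nat \<Rightarrow> real \<Rightarrow> (nat \<Rightarrow> nat \<Rightarrow> real) \<Rightarrow> (nat \<Rightarrow> nat \<Rightarrow> real)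
    \<Rightarrow> nat \<Rightarrow> real mat" where
  "rho_hat m n phi lf pf t = avg_mat t n (rho_all m n phi lf pf t)"

definition tau_hat :: "nat \<Rightarrow> nat \<Rightarrow> real \<Rightarrow> (nat \<Rightarrow> nat \<Rightarrow> real) \<Rightarrow> (nat \<Rightarrow> nat \<Rightarrow> real)
    \<Rightarrow> nat \<Rightarrow> real mat" where
  "tau_hat m n phi lf pf t = avg_mat t m (tau_k t phi lf (rho_hat m n phi lf pf (t - 1)))"

definition gd_lf :: "(nat \<Rightarrow> nat \<Rightarrow> real) \<Rightarrow> nat \<Rightarrow> nat \<Rightarrow> (nat \<Rightarrow> real) \<Rightarrow> (nat \<Rightarrow> real)
    \<Rightarrow> (nat \<Rightarrow> nat \<Rightarrow> real \<Rightarrow> real \<Rightarrow> real) \<Rightarrow> (nat \<Rightarrow> nat \<Rightarrow> real \<Rightarrow> real)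
    \<Rightarrow> (nat \<Rightarrow> real) \<Rightarrow> nat \<Rightarrow> nat \<Rightarrow> real" where
  "gd_lf A m n Y eta Lf Pf mu0 k s =
     - eta (s - 1) * d11 (Lf (s - 1) k)
         (matvec A n (gd_mu A m n Y eta Lf Pf mu0 (s - 1)) k) (Y k)"

definition gd_pf :: "(nat \<Rightarrow> nat \<Rightarrow> real) \<Rightarrow> nat \<Rightarrow> nat \<Rightarrow> (nat \<Rightarrow> real) \<Rightarrow> (nat \<Rightarrow> real)
    \<Rightarrow> (nat \<Rightarrow> nat \<Rightarrow> real \<Rightarrow> real \<Rightarrow> real) \<Rightarrow> (nat \<Rightarrow> nat \<Rightarrow> real \<Rightarrow> real)
    \<Rightarrow> (nat \<Rightarrow> real) \<Rightarrow> nat \<Rightarrow> nat \<Rightarrow> real" where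
  "gd_pf A m n Y eta Lf Pf mu0 l s =
     deriv (Pf s l) (gd_pre A m n Y eta Lf Pf mu0 (s - 1) l)"

end

theory Submission
  imports Defs "Jordan_Normal_Form.Determinant"
begin

(*
  All estimator matrices are lower triangular, so the matrix inverted in tau_k is 1 - N with
  N strictly lower triangular, hence nilpotent, and its inverse is the finite Neumann sum of
  the powers N^j, j < t. The diagonal entries feeding the recursion are derivatives of
  Lambda-Lipschitz maps, scaled by eta <= Lambda, and phi <= K, so with X = K * Lambda >= 2
  sums, products (the inner dimension t is absorbed as t <= X^t), averages and Neumann sums of
  t x t matrices keep all entries below X^e for an exponent e depending on t alone. The
  operator norm of a t x t matrix is at most t^2 times its largest entry. Only the Lipschitz
  constants of (A4'), (A5') and the upper bounds of (A1), (A3) are needed.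
*)

lemma abs_deriv_le_lipschitz:
  fixes f :: "real \<Rightarrow> real"
  assumes "f differentiable (at x)" and "L-lipschitz_on UNIV f"
  shows "\<bar>deriv f x\<bar> \<le> L"
proof -
  have "((\<lambda>h. (f (x + h) - f x) / h) \<longlongrightarrow> deriv f x) (at 0)"
    using assms(1) DERIV_deriv_iff_real_differentiable DERIV_def by blast
  then have lim: "((\<lambda>h. \<bar>(f (x + h) - f x) / h\<bar>) \<longlongrightarrow> \<bar>deriv f x\<bar>) (at 0)"
    by (rule tendsto_rabs)
  have "\<bar>(f (x + h) - f x) / h\<bar> \<le> L" if "h \<noteq> 0" for h
  proof -
    have "\<bar>f (x + h) - f x\<bar> \<le> L * \<bar>h\<bar>"
      using lipschitz_onD[OF assms(2), of "x + h" x] by (simp add: dist_real_def)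
    then show ?thesis using that by (simp add: abs_divide divide_le_eq)
  qed
  then have "eventually (\<lambda>h. \<bar>(f (x + h) - f x) / h\<bar> \<le> L) (at 0)"
    by (simp add: eventually_at_filter)
  then show ?thesis by (rule tendsto_upperbound[OF lim]) simp
qed

lemma lipschitz_on_Pair_slice:
  fixes f :: "'a::metric_space \<times> 'b::metric_space \<Rightarrow> 'c::metric_space"
  assumes "L-lipschitz_on UNIV f"
  shows "L-lipschitz_on UNIV (\<lambda>u. f (u, w))"
proof (rule lipschitz_onI)
  show "0 \<le> L" using lipschitz_on_nonneg[OF assms] .
  fix x y :: 'a
  show "dist (f (x, w)) (f (y, w)) \<le> L * dist x y"
    using lipschitz_onD[OF assms, of "(x, w)" "(y, w)"] by (simp add: dist_Pair_Pair)
qed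

lemma carrier_avg_mat [simp]: "avg_mat t N f \<in> carrier_mat t t"
  unfolding avg_mat_def by auto

lemma carrier_diag_mat [simp]: "diag_mat t d \<in> carrier_mat t t"
  unfolding diag_mat_def by auto

lemma carrier_shiftO [simp]: "shiftO t M \<in> carrier_mat t t"
  unfolding shiftO_def by auto

lemma index_mult_mat_sum:
  "A \<in> carrier_mat r k \<Longrightarrow> B \<in> carrier_mat k c \<Longrightarrow> i < r \<Longrightarrow> j < c \<Longrightarrow>
    (A * B) $$ (i, j) = (\<Sum>l<k. A $$ (i, l) * B $$ (l, j))"
  by (auto simp: scalar_prod_def atLeast0LessThan intro!: sum.cong)

definition lower_band :: "nat \<Rightarrow> 'a::zero mat \<Rightarrow> bool" where
  "lower_band d M \<longleftrightarrow> (\<forall>i<dim_row M. \<forall>j<dim_col M. i < j + d \<longrightarrow> M $$ (i, j) = 0)"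

lemma lower_band_mono: "lower_band b M \<Longrightarrow> a \<le> b \<Longrightarrow> lower_band a M"
  unfolding lower_band_def by force

lemma lower_band_mult:
  fixes A B :: "'a::semiring_0 mat"
  assumes A: "A \<in> carrier_mat r k" and B: "B \<in> carrier_mat k c"
    and "lower_band a A" and "lower_band b B"
  shows "lower_band (a + b) (A * B)"
  unfolding lower_band_def
proof (intro allI impI)
  fix i j assume "i < dim_row (A * B)" "j < dim_col (A * B)" and ij: "i < j + (a + b)"
  then have i: "i < r" and j: "j < c" using A B by auto
  have "A $$ (i, l) * B $$ (l, j) = 0" if "l < k" for l
    using assms that i j ij unfolding lower_band_def
    by (cases "i < l + a") auto
  then show "(A * B) $$ (i, j) = 0" by (simp add: index_mult_mat_sum[OF A B i j])
qed

lemma lower_band_add: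
  fixes A B :: "'a::monoid_add mat"
  shows "A \<in> carrier_mat r c \<Longrightarrow> B \<in> carrier_mat r c \<Longrightarrow> lower_band a A \<Longrightarrow> lower_band a B \<Longrightarrow>
    lower_band a (A + B)"
  unfolding lower_band_def by auto

lemma lower_band_smult: "lower_band a (B :: 'a::mult_zero mat) \<Longrightarrow> lower_band a (x \<cdot>\<^sub>m B)"
  unfolding lower_band_def by auto

lemma lower_band_one: "lower_band 0 (1\<^sub>m t)"
  unfolding lower_band_def by auto

lemma lower_band_diag_mat: "lower_band 0 (diag_mat t d)"
  unfolding lower_band_def diag_mat_def by auto

lemma lower_band_shiftO:
  "M \<in> carrier_mat (t - 1) (t - 1) \<Longrightarrow> lower_band a M \<Longrightarrow> lower_band (a + 1) (shiftO t M)"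
  unfolding lower_band_def shiftO_def by auto

lemma lower_band_avg_mat:
  assumes "\<And>i. i < N \<Longrightarrow> f i \<in> carrier_mat t t \<and> lower_band a (f i)"
  shows "lower_band a (avg_mat t N f)"
  unfolding lower_band_def avg_mat_def
proof (intro allI impI)
  fix i j assume "i < dim_row (mat t t (\<lambda>ij. 1 / real N * (\<Sum>i<N. f i $$ ij)))"
    "j < dim_col (mat t t (\<lambda>ij. 1 / real N * (\<Sum>i<N. f i $$ ij)))" "i < j + a"
  then show "mat t t (\<lambda>ij. 1 / real N * (\<Sum>i<N. f i $$ ij)) $$ (i, j) = 0"
    using assms by (fastforce simp: lower_band_def intro!: sum.neutral)
qed

lemma lower_band_pow_mat:
  fixes N :: "'a::semiring_1 mat"
  assumes N: "N \<in> carrier_mat t t" and "lower_band 1 N"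
  shows "lower_band j (N ^\<^sub>m j)"
proof (induction j)
  case 0
  show ?case using N lower_band_one[of t] by simp
next
  case (Suc j)
  then show ?case using lower_band_mult[OF pow_carrier_mat[OF N] N Suc assms(2)] by simp
qed

lemma lower_band_zero: "M \<in> carrier_mat t t \<Longrightarrow> lower_band t M \<Longrightarrow> M = 0\<^sub>m t t"
  unfolding lower_band_def by (intro eq_matI) auto

fun geom_sum_mat :: "'a::semiring_1 mat \<Rightarrow> nat \<Rightarrow> 'a mat" where
  "geom_sum_mat N 0 = 0\<^sub>m (dim_row N) (dim_row N)"
| "geom_sum_mat N (Suc j) = geom_sum_mat N j + N ^\<^sub>m j"

lemma carrier_geom_sum_mat: "N \<in> carrier_mat t t \<Longrightarrow> geom_sum_mat N j \<in> carrier_mat t t"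
  by (induction j) auto

lemma lower_band_geom_sum_mat:
  assumes N: "N \<in> carrier_mat t t" and "lower_band 1 N"
  shows "lower_band 0 (geom_sum_mat N j)"
proof (induction j)
  case 0
  show ?case unfolding lower_band_def by auto
next
  case (Suc j)
  then show ?case
    using lower_band_add[OF carrier_geom_sum_mat[OF N] pow_carrier_mat[OF N]]
      lower_band_mono[OF lower_band_pow_mat[OF assms]] by simp
qed

lemma geom_sum_mat_telescope:
  fixes N :: "'a::ring_1 mat"
  assumes N: "N \<in> carrier_mat t t"
  shows "geom_sum_mat N j * (1\<^sub>m t - N) = 1\<^sub>m t - N ^\<^sub>m j"
proof (induction j)
  case 0
  show ?case using N by (intro eq_matI) (auto simp: index_mult_mat_sum)
next
  case (Suc j)
  have S: "geom_sum_mat N j \<in> carrier_mat t t" and P: "N ^\<^sub>m j \<in> carrier_mat t t"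
    using carrier_geom_sum_mat[OF N] pow_carrier_mat[OF N] by auto
  have D: "1\<^sub>m t - N \<in> carrier_mat t t" using N by (simp add: minus_carrier_mat)
  have "geom_sum_mat N (Suc j) * (1\<^sub>m t - N)
      = geom_sum_mat N j * (1\<^sub>m t - N) + N ^\<^sub>m j * (1\<^sub>m t - N)"
    by (simp add: add_mult_distrib_mat[OF S P D])
  also have "\<dots> = (1\<^sub>m t - N ^\<^sub>m j) + (N ^\<^sub>m j - N ^\<^sub>m j * N)"
    using P by (simp add: Suc mult_minus_distrib_mat[OF P one_carrier_mat N] right_mult_one_mat)
  also have "\<dots> = 1\<^sub>m t - N ^\<^sub>m Suc j"
    using P N by (intro eq_matI) auto
  finally show ?case .
qed

lemma inv_mat_eqI:
  fixes M B :: "real mat"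
  assumes M: "M \<in> carrier_mat t t" and B: "B \<in> carrier_mat t t" and BM: "B * M = 1\<^sub>m t"
  shows "inv_mat M = B"
proof -
  have MB: "M * B = 1\<^sub>m t" using mat_mult_left_right_inverse[OF B M BM] .
  have unique: "B' = B" if B': "B' \<in> carrier_mat t t" and MB': "M * B' = 1\<^sub>m t" for B'
  proof -
    have "B' = (B * M) * B'" using BM B' by simp
    also have "\<dots> = B * (M * B')" using B M B' by (rule assoc_mult_mat)
    also have "\<dots> = B" using MB' B by simp
    finally show ?thesis .
  qed
  have "dim_row M = t" using M by simp
  then show ?thesis
    unfolding inv_mat_def using B MB BM unique by (intro the_equality) blast+
qed

lemma inv_mat_one_minus_nilpotent:
  fixes N :: "real mat"
  assumes N: "N \<in> carrier_mat t t" and "lower_band 1 N"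
  shows "inv_mat (1\<^sub>m t - N) = geom_sum_mat N t"
proof -
  have "N ^\<^sub>m t = 0\<^sub>m t t"
    by (rule lower_band_zero[OF pow_carrier_mat[OF N] lower_band_pow_mat[OF assms]])
  then have "geom_sum_mat N t * (1\<^sub>m t - N) = 1\<^sub>m t"
    using geom_sum_mat_telescope[OF N, of t] by (intro eq_matI) auto
  then show ?thesis
    using N carrier_geom_sum_mat[OF N] by (intro inv_mat_eqI) (auto simp: minus_carrier_mat)
qed

definition entries_bounded :: "real mat \<Rightarrow> real \<Rightarrow> bool" where
  "entries_bounded M B \<longleftrightarrow> (\<forall>i<dim_row M. \<forall>j<dim_col M. \<bar>M $$ (i, j)\<bar> \<le> B)"

lemma entries_boundedD:
  "entries_bounded M B \<Longrightarrow> M \<in> carrier_mat r c \<Longrightarrow> i < r \<Longrightarrow> j < c \<Longrightarrow> \<bar>M $$ (i, j)\<bar> \<le> B"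
  unfolding entries_bounded_def by auto

lemma abs_vec_index_le_one:
  fixes x :: "real vec"
  assumes "x \<in> carrier_vec c" and "x \<bullet> x \<le> 1" and "j < c"
  shows "\<bar>x $ j\<bar> \<le> 1"
proof -
  have "x $ j * x $ j \<le> (\<Sum>i\<in>{0..<c}. x $ i * x $ i)"
    by (rule member_le_sum) (use assms(3) in auto)
  also have "\<dots> = x \<bullet> x" using assms(1) by (simp add: scalar_prod_def)
  finally have "\<bar>x $ j\<bar>\<^sup>2 \<le> 1\<^sup>2" using assms(2) by (simp add: power2_eq_square)
  then show ?thesis by (rule power2_le_imp_le) simp
qed

lemma abs_mult_mat_vec_index_le:
  fixes x :: "real vec"
  assumes M: "M \<in> carrier_mat r c" and bounded: "entries_bounded M B" and B: "0 \<le> B"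
    and x: "x \<in> carrier_vec c" and x_le: "\<And>j. j < c \<Longrightarrow> \<bar>x $ j\<bar> \<le> 1" and i: "i < r"
  shows "\<bar>(M *\<^sub>v x) $ i\<bar> \<le> real c * B"
proof -
  have "\<bar>(M *\<^sub>v x) $ i\<bar> = \<bar>\<Sum>j\<in>{0..<c}. M $$ (i, j) * x $ j\<bar>"
    using M x i by (simp add: scalar_prod_def)
  also have "\<dots> \<le> (\<Sum>j\<in>{0..<c}. B)"
  proof (rule order_trans[OF sum_abs], rule sum_mono)
    fix j assume "j \<in> {0..<c}"
    then show "\<bar>M $$ (i, j) * x $ j\<bar> \<le> B"
      using entries_boundedD[OF bounded M i, of j] x_le[of j]
      by (simp add: abs_mult) (metis abs_ge_zero mult_mono mult.right_neutral B)
  qed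
  finally show ?thesis by simp
qed

lemma op_norm_le_entries_bounded:
  assumes M: "M \<in> carrier_mat r c" and bounded: "entries_bounded M B" and B: "0 \<le> B"
  shows "op_norm M \<le> real r * real c * B"
  unfolding op_norm_def
proof (rule cSup_least)
  have "0\<^sub>v c \<bullet> 0\<^sub>v c \<le> (1::real)" by (simp add: scalar_prod_def)
  moreover have "0\<^sub>v c \<in> carrier_vec (dim_col M)" using M by simp
  ultimately show "{sqrt ((M *\<^sub>v x) \<bullet> (M *\<^sub>v x)) |x. x \<in> carrier_vec (dim_col M) \<and> x \<bullet> x \<le> 1} \<noteq> {}"
    by blast
next
  fix y assume "y \<in> {sqrt ((M *\<^sub>v x) \<bullet> (M *\<^sub>v x)) |x. x \<in> carrier_vec (dim_col M) \<and> x \<bullet> x \<le> 1}"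
  then obtain x :: "real vec" where y: "y = sqrt ((M *\<^sub>v x) \<bullet> (M *\<^sub>v x))"
    and x: "x \<in> carrier_vec c" and unit: "x \<bullet> x \<le> 1"
    using M by auto
  have "(M *\<^sub>v x) \<bullet> (M *\<^sub>v x) = (\<Sum>i\<in>{0..<r}. ((M *\<^sub>v x) $ i)\<^sup>2)"
    using M by (simp add: scalar_prod_def power2_eq_square)
  also have "\<dots> \<le> (\<Sum>i\<in>{0..<r}. (real c * B)\<^sup>2)"
  proof (rule sum_mono)
    fix i assume "i \<in> {0..<r}"
    then have "\<bar>(M *\<^sub>v x) $ i\<bar>\<^sup>2 \<le> (real c * B)\<^sup>2"
      using abs_mult_mat_vec_index_le[OF M bounded B x abs_vec_index_le_one[OF x unit]]
      by (intro power_mono) auto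
    then show "((M *\<^sub>v x) $ i)\<^sup>2 \<le> (real c * B)\<^sup>2" by simp
  qed
  also have "\<dots> = real r * (real c * B)\<^sup>2" by simp
  also have "\<dots> \<le> (real r * (real c * B))\<^sup>2"
  proof -
    have "real r \<le> (real r)\<^sup>2" by (cases r) (auto simp: power2_eq_square)
    then show ?thesis by (simp add: power_mult_distrib mult_right_mono)
  qed
  finally have "y \<le> real r * (real c * B)"
    using y B by (metis real_sqrt_le_iff real_sqrt_abs abs_of_nonneg mult_nonneg_nonneg of_nat_0_le_iff)
  then show "y \<le> real r * real c * B" by (simp add: mult.assoc)
qed

definition lower_triangular_bounded :: "real \<Rightarrow> nat \<Rightarrow> nat \<Rightarrow> real mat \<Rightarrow> bool" where
  "lower_triangular_bounded X t e M \<longleftrightarrow>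
     M \<in> carrier_mat t t \<and> lower_band 0 M \<and> entries_bounded M (X ^ e)"

definition tau_exp :: "nat \<Rightarrow> nat \<Rightarrow> nat" where
  "tau_exp t r = t * (2 * t + r + 2) + 2 * t + 3"

fun rho_exp :: "nat \<Rightarrow> nat" where
  "rho_exp 0 = 0"
| "rho_exp (Suc t) = 2 * Suc t + tau_exp (Suc t) (rho_exp t) + rho_exp t + 3"

definition estimator_exp :: "nat \<Rightarrow> nat" where
  "estimator_exp t = 2 * t + tau_exp t (rho_exp (t - 1)) + rho_exp t"

lemma rho_all_Suc:
  "rho_all m n phi lf pf (Suc t) l =
     diag_mat (Suc t) (pf l) *
       (1\<^sub>m (Suc t) + (tau_hat m n phi lf pf (Suc t) + 1\<^sub>m (Suc t)) * shiftO (Suc t) (rho_all m n phi lf pf t l))"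
  by (simp add: tau_hat_def rho_hat_def Let_def)

context
  fixes X :: real
  assumes X: "2 \<le> X"
begin

lemma of_nat_le_pow: "real k \<le> X ^ k"
proof -
  have "real k \<le> 2 ^ k" using less_exp[of k] by (simp add: less_imp_le)
  also have "\<dots> \<le> X ^ k" using X by (intro power_mono) auto
  finally show ?thesis .
qed

lemma pow_mono_exp: "a \<le> b \<Longrightarrow> X ^ a \<le> X ^ b"
  using X by (intro power_increasing) auto

lemma entries_bounded_mult:
  assumes A: "A \<in> carrier_mat r k" and B: "B \<in> carrier_mat k c"
    and "entries_bounded A (X ^ a)" and "entries_bounded B (X ^ b)" and "k + a + b \<le> e"
  shows "entries_bounded (A * B) (X ^ e)"
  unfolding entries_bounded_def
proof (intro allI impI)
  fix i j assume "i < dim_row (A * B)" "j < dim_col (A * B)"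
  then have i: "i < r" and j: "j < c" using A B by auto
  have "\<bar>(A * B) $$ (i, j)\<bar> \<le> (\<Sum>l<k. \<bar>A $$ (i, l)\<bar> * \<bar>B $$ (l, j)\<bar>)"
    unfolding index_mult_mat_sum[OF A B i j] abs_mult[symmetric] by (rule sum_abs)
  also have "\<dots> \<le> (\<Sum>l<k. X ^ a * X ^ b)"
    using entries_boundedD[OF assms(3) A i] entries_boundedD[OF assms(4) B _ j] X
    by (intro sum_mono mult_mono) auto
  also have "\<dots> \<le> X ^ k * X ^ (a + b)"
    using of_nat_le_pow[of k] X by (simp add: power_add mult_right_mono)
  also have "\<dots> \<le> X ^ e"
    using pow_mono_exp[OF assms(5)] by (simp add: power_add)
  finally show "\<bar>(A * B) $$ (i, j)\<bar> \<le> X ^ e" .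
qed

lemma entries_bounded_add:
  assumes A: "A \<in> carrier_mat r c" and B: "B \<in> carrier_mat r c"
    and "entries_bounded A (X ^ a)" and "entries_bounded B (X ^ b)" and "a < e" and "b < e"
  shows "entries_bounded (A + B) (X ^ e)"
  unfolding entries_bounded_def
proof (intro allI impI)
  fix i j assume "i < dim_row (A + B)" "j < dim_col (A + B)"
  then have i: "i < r" and j: "j < c" using B by auto
  have "\<bar>(A + B) $$ (i, j)\<bar> \<le> X ^ a + X ^ b"
    using entries_boundedD[OF assms(3) A i j] entries_boundedD[OF assms(4) B i j] A B i j by simp
  also have "\<dots> \<le> 2 * X ^ (e - 1)"
    using pow_mono_exp[of a "e - 1"] pow_mono_exp[of b "e - 1"] assms(5,6) by force
  also have "\<dots> \<le> X ^ e"
    using X assms(5) power_Suc[of X "e - 1"] by (simp add: mult_right_mono)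
  finally show "\<bar>(A + B) $$ (i, j)\<bar> \<le> X ^ e" .
qed

lemma entries_bounded_smult:
  assumes "entries_bounded B (X ^ b)" and "\<bar>x\<bar> \<le> X ^ a" and "a + b \<le> e"
  shows "entries_bounded (x \<cdot>\<^sub>m B) (X ^ e)"
  unfolding entries_bounded_def
proof (intro allI impI)
  fix i j assume "i < dim_row (x \<cdot>\<^sub>m B)" "j < dim_col (x \<cdot>\<^sub>m B)"
  then have ij: "i < dim_row B" "j < dim_col B" by auto
  have "\<bar>(x \<cdot>\<^sub>m B) $$ (i, j)\<bar> \<le> X ^ a * X ^ b"
    using assms(1,2) ij unfolding entries_bounded_def by (simp add: abs_mult mult_mono)
  also have "\<dots> \<le> X ^ e" using pow_mono_exp[OF assms(3)] by (simp add: power_add)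
  finally show "\<bar>(x \<cdot>\<^sub>m B) $$ (i, j)\<bar> \<le> X ^ e" .
qed

lemma entries_bounded_one: "entries_bounded (1\<^sub>m t) (X ^ a)"
  using X unfolding entries_bounded_def by (auto simp: one_le_power)

lemma entries_bounded_diag_mat:
  "(\<And>s. s \<in> {1..t} \<Longrightarrow> \<bar>d s\<bar> \<le> X ^ a) \<Longrightarrow> entries_bounded (diag_mat t d) (X ^ a)"
  using X unfolding entries_bounded_def diag_mat_def by auto

lemma entries_bounded_shiftO:
  "M \<in> carrier_mat (t - 1) (t - 1) \<Longrightarrow> entries_bounded M (X ^ a) \<Longrightarrow>
    entries_bounded (shiftO t M) (X ^ a)"
  using X unfolding entries_bounded_def shiftO_def by auto

lemma entries_bounded_avg_mat:
  assumes "\<And>i. i < N \<Longrightarrow> f i \<in> carrier_mat t t \<and> entries_bounded (f i) (X ^ a)"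
  shows "entries_bounded (avg_mat t N f) (X ^ a)"
  unfolding entries_bounded_def
proof (intro allI impI)
  fix i j assume "i < dim_row (avg_mat t N f)" "j < dim_col (avg_mat t N f)"
  then have ij: "i < t" "j < t" by (simp_all add: avg_mat_def)
  have "\<bar>\<Sum>l<N. f l $$ (i, j)\<bar> \<le> (\<Sum>l<N. X ^ a)"
    using assms ij by (intro order_trans[OF sum_abs] sum_mono) (auto dest: entries_boundedD)
  then show "\<bar>avg_mat t N f $$ (i, j)\<bar> \<le> X ^ a"
    using X ij by (cases "N = 0") (auto simp: avg_mat_def abs_mult field_simps)
qed

lemma entries_bounded_pow_mat:
  assumes N: "N \<in> carrier_mat t t" and "entries_bounded N (X ^ a)"
  shows "entries_bounded (N ^\<^sub>m j) (X ^ (j * (t + a)))"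
proof (induction j)
  case 0
  show ?case using N entries_bounded_one[of t 0] by simp
next
  case (Suc j)
  show ?case
    using entries_bounded_mult[OF pow_carrier_mat[OF N] N Suc assms(2)] by simp
qed

lemma entries_bounded_geom_sum_mat:
  assumes N: "N \<in> carrier_mat t t" and "entries_bounded N (X ^ a)"
  shows "entries_bounded (geom_sum_mat N j) (X ^ (j * (t + a) + j))"
proof (induction j)
  case 0
  show ?case using N unfolding entries_bounded_def by simp
next
  case (Suc j)
  show ?case
    using entries_bounded_add[OF carrier_geom_sum_mat[OF N] pow_carrier_mat[OF N] Suc
        entries_bounded_pow_mat[OF assms], of "Suc j * (t + a) + Suc j"] by simp
qed

lemma op_norm_le_pow:
  assumes "M \<in> carrier_mat r c" and "entries_bounded M (X ^ a)"
  shows "op_norm M \<le> X ^ (r + c + a)"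
proof -
  have "op_norm M \<le> real r * real c * X ^ a"
    using op_norm_le_entries_bounded[OF assms] X by simp
  also have "\<dots> \<le> X ^ r * X ^ c * X ^ a"
    using of_nat_le_pow[of r] of_nat_le_pow[of c] X by (intro mult_mono) auto
  finally show ?thesis by (simp add: power_add)
qed

lemma lower_triangular_bounded_avg_mat:
  "(\<And>i. i < N \<Longrightarrow> lower_triangular_bounded X t e (f i)) \<Longrightarrow>
    lower_triangular_bounded X t e (avg_mat t N f)"
  unfolding lower_triangular_bounded_def
  using lower_band_avg_mat entries_bounded_avg_mat by auto

lemma tau_k_lower_triangular_bounded:
  assumes rb: "lower_triangular_bounded X (t - 1) r rb" and phi: "\<bar>phi\<bar> \<le> X"
    and lf: "\<And>s. s \<in> {1..t} \<Longrightarrow> \<bar>lf k s\<bar> \<le> X ^ 2"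
  shows "lower_triangular_bounded X t (tau_exp t r) (tau_k t phi lf rb k)"
proof -
  let ?D = "diag_mat t (lf k)"
  let ?N = "?D * shiftO t rb"
  have rb': "rb \<in> carrier_mat (t - 1) (t - 1)" "lower_band 0 rb" "entries_bounded rb (X ^ r)"
    using rb unfolding lower_triangular_bounded_def by auto
  have D: "?D \<in> carrier_mat t t" "entries_bounded ?D (X ^ 2)"
    using entries_bounded_diag_mat[OF lf] by auto
  have N: "?N \<in> carrier_mat t t" "lower_band 1 ?N" "entries_bounded ?N (X ^ (t + 2 + r))"
    using lower_band_mult[OF D(1) carrier_shiftO lower_band_diag_mat lower_band_shiftO[OF rb'(1,2)]]
      entries_bounded_mult[OF D(1) carrier_shiftO D(2) entries_bounded_shiftO[OF rb'(1,3)], of "t + 2 + r"]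
      mult_carrier_mat[OF D(1) carrier_shiftO] by auto
  define S where "S = geom_sum_mat ?N t"
  have exp_eq: "t * (t + (t + 2 + r)) + t = t * (2 * t + r + 2) + t" by (simp add: algebra_simps)
  have S: "S \<in> carrier_mat t t" "lower_band 0 S" "entries_bounded S (X ^ (t * (2 * t + r + 2) + t))"
    unfolding S_def using carrier_geom_sum_mat[OF N(1)] lower_band_geom_sum_mat[OF N(1,2)]
      entries_bounded_geom_sum_mat[OF N(1,3), of t] unfolding exp_eq by auto
  have "entries_bounded (S * ?D) (X ^ (tau_exp t r - 1))"
    by (rule entries_bounded_mult[OF S(1) D(1) S(3) D(2)]) (simp add: tau_exp_def)
  then have SD: "S * ?D \<in> carrier_mat t t" "lower_band 0 (S * ?D)"
    "entries_bounded (S * ?D) (X ^ (tau_exp t r - 1))"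
    using mult_carrier_mat[OF S(1) D(1)] lower_band_mult[OF S(1) D(1) S(2) lower_band_diag_mat]
    by auto
  have "entries_bounded (phi \<cdot>\<^sub>m (S * ?D)) (X ^ tau_exp t r)"
    using entries_bounded_smult[OF SD(3), of phi 1] phi by (simp add: tau_exp_def)
  moreover have "tau_k t phi lf rb k = phi \<cdot>\<^sub>m (S * ?D)"
    unfolding tau_k_def S_def inv_mat_one_minus_nilpotent[OF N(1,2)] ..
  ultimately show ?thesis
    using SD lower_band_smult unfolding lower_triangular_bounded_def by auto
qed

lemma tau_hat_lower_triangular_bounded:
  assumes rho: "\<And>l. l < n \<Longrightarrow> lower_triangular_bounded X (t - 1) r (rho_all m n phi lf pf (t - 1) l)"
    and phi: "\<bar>phi\<bar> \<le> X" and lf: "\<And>k s. k < m \<Longrightarrow> s \<in> {1..t} \<Longrightarrow> \<bar>lf k s\<bar> \<le> X ^ 2"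
  shows "lower_triangular_bounded X t (tau_exp t r) (tau_hat m n phi lf pf t)"
proof -
  have "lower_triangular_bounded X (t - 1) r (rho_hat m n phi lf pf (t - 1))"
    unfolding rho_hat_def using rho by (rule lower_triangular_bounded_avg_mat)
  then show ?thesis
    unfolding tau_hat_def using tau_k_lower_triangular_bounded phi lf
    by (intro lower_triangular_bounded_avg_mat) blast
qed

lemma rho_all_lower_triangular_bounded:
  assumes phi: "\<bar>phi\<bar> \<le> X"
    and lf: "\<And>k s. k < m \<Longrightarrow> s \<in> {1..t} \<Longrightarrow> \<bar>lf k s\<bar> \<le> X ^ 2"
    and pf: "\<And>l s. l < n \<Longrightarrow> s \<in> {1..t} \<Longrightarrow> \<bar>pf l s\<bar> \<le> X"
  shows "t' \<le> t \<Longrightarrow> l < n \<Longrightarrow> lower_triangular_bounded X t' (rho_exp t') (rho_all m n phi lf pf t' l)"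
proof (induction t' arbitrary: l)
  case 0
  then show ?case by (simp add: lower_triangular_bounded_def lower_band_def entries_bounded_def)
next
  case (Suc t')
  let ?T = "Suc t'"
  let ?te = "tau_exp ?T (rho_exp t')"
  let ?tau = "tau_hat m n phi lf pf ?T + 1\<^sub>m ?T"
  let ?sh = "shiftO ?T (rho_all m n phi lf pf t' l)"
  let ?R = "1\<^sub>m ?T + ?tau * ?sh"
  have tau: "lower_triangular_bounded X ?T ?te (tau_hat m n phi lf pf ?T)"
    using Suc lf by (intro tau_hat_lower_triangular_bounded[OF _ phi]) auto
  then have tau': "?tau \<in> carrier_mat ?T ?T" "lower_band 0 ?tau" "entries_bounded ?tau (X ^ (?te + 1))"
    unfolding lower_triangular_bounded_def
    using lower_band_add[OF _ one_carrier_mat _ lower_band_one]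
      entries_bounded_add[OF _ one_carrier_mat _ entries_bounded_one[of ?T 0], of _ _ "?te + 1"]
    by auto
  have rho: "rho_all m n phi lf pf t' l \<in> carrier_mat t' t'" "lower_band 0 (rho_all m n phi lf pf t' l)"
    "entries_bounded (rho_all m n phi lf pf t' l) (X ^ rho_exp t')"
    using Suc unfolding lower_triangular_bounded_def by auto
  have sh: "lower_band 1 ?sh" "entries_bounded ?sh (X ^ rho_exp t')"
    using lower_band_shiftO[of _ ?T] entries_bounded_shiftO[of _ ?T] rho by auto
  have Q: "?tau * ?sh \<in> carrier_mat ?T ?T" "lower_band 1 (?tau * ?sh)"
    "entries_bounded (?tau * ?sh) (X ^ (?T + ?te + rho_exp t' + 1))"
    using lower_band_mult[OF tau'(1) carrier_shiftO tau'(2) sh(1)]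
      entries_bounded_mult[OF tau'(1) carrier_shiftO tau'(3) sh(2), of "?T + ?te + rho_exp t' + 1"]
      mult_carrier_mat[OF tau'(1) carrier_shiftO] by auto
  have R: "?R \<in> carrier_mat ?T ?T" "lower_band 0 ?R"
    "entries_bounded ?R (X ^ (?T + ?te + rho_exp t' + 2))"
    using Q lower_band_add[OF one_carrier_mat Q(1) lower_band_one lower_band_mono[OF Q(2)]]
      entries_bounded_add[OF one_carrier_mat Q(1) entries_bounded_one[of ?T 0] Q(3),
        where e = "?T + ?te + rho_exp t' + 2"] by auto
  have P: "entries_bounded (diag_mat ?T (pf l)) (X ^ 1)"
    using pf Suc.prems by (intro entries_bounded_diag_mat) auto
  show ?case
    unfolding rho_all_Suc lower_triangular_bounded_def
    using R lower_band_mult[OF carrier_diag_mat R(1) lower_band_diag_mat R(2)]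
      entries_bounded_mult[OF carrier_diag_mat R(1) P R(3), where e = "rho_exp ?T"]
      mult_carrier_mat[OF carrier_diag_mat R(1)] by auto
qed

lemma estimators_le_pow:
  assumes phi: "\<bar>phi\<bar> \<le> X"
    and lf: "\<And>k s. k < m \<Longrightarrow> s \<in> {1..t} \<Longrightarrow> \<bar>lf k s\<bar> \<le> X ^ 2"
    and pf: "\<And>l s. l < n \<Longrightarrow> s \<in> {1..t} \<Longrightarrow> \<bar>pf l s\<bar> \<le> X"
  shows "max (op_norm (tau_hat m n phi lf pf t)) (op_norm (rho_hat m n phi lf pf t))
    \<le> X ^ estimator_exp t"
proof -
  have rho: "lower_triangular_bounded X t' (rho_exp t') (rho_all m n phi lf pf t' l)"
    if "t' \<le> t" "l < n" for t' l
    using phi lf pf that by (rule rho_all_lower_triangular_bounded)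
  have "lower_triangular_bounded X t (tau_exp t (rho_exp (t - 1))) (tau_hat m n phi lf pf t)"
    using rho lf by (intro tau_hat_lower_triangular_bounded[OF _ phi]) auto
  then have "op_norm (tau_hat m n phi lf pf t) \<le> X ^ (t + t + tau_exp t (rho_exp (t - 1)))"
    unfolding lower_triangular_bounded_def using op_norm_le_pow by blast
  also have "\<dots> \<le> X ^ estimator_exp t"
    unfolding estimator_exp_def by (rule pow_mono_exp) simp
  finally have tau_le: "op_norm (tau_hat m n phi lf pf t) \<le> X ^ estimator_exp t" .
  have "lower_triangular_bounded X t (rho_exp t) (rho_hat m n phi lf pf t)"
    unfolding rho_hat_def using rho by (intro lower_triangular_bounded_avg_mat) auto
  then have "op_norm (rho_hat m n phi lf pf t) \<le> X ^ (t + t + rho_exp t)"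
    unfolding lower_triangular_bounded_def using op_norm_le_pow by blast
  also have "\<dots> \<le> X ^ estimator_exp t"
    unfolding estimator_exp_def by (rule pow_mono_exp) simp
  finally show ?thesis using tau_le by simp
qed

end

lemma abs_gd_lf_le:
  assumes "0 < eta (s - 1)" "eta (s - 1) \<le> \<Lambda>"
    and "\<Lambda>-lipschitz_on UNIV (\<lambda>u. d1 (Lf (s - 1) k) u (Y k))"
    and "\<And>x. (\<lambda>u. d1 (Lf (s - 1) k) u (Y k)) differentiable (at x)"
  shows "\<bar>gd_lf A m n Y eta Lf Pf mu0 k s\<bar> \<le> \<Lambda> ^ 2"
proof -
  let ?x = "matvec A n (gd_mu A m n Y eta Lf Pf mu0 (s - 1)) k"
  have "\<bar>d11 (Lf (s - 1) k) ?x (Y k)\<bar> \<le> \<Lambda>"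
    unfolding d11_def using assms(3,4) by (rule abs_deriv_le_lipschitz[rotated])
  then show ?thesis
    using assms(1,2) unfolding gd_lf_def
    by (simp add: abs_mult power2_eq_square mult_mono)
qed

lemma abs_gd_pf_le:
  assumes "\<Lambda>-lipschitz_on UNIV (Pf s l)" and "\<And>x. Pf s l differentiable (at x)"
  shows "\<bar>gd_pf A m n Y eta Lf Pf mu0 l s\<bar> \<le> \<Lambda>"
  unfolding gd_pf_def using assms(2,1) by (rule abs_deriv_le_lipschitz)

lemma gd_estimators_le:
  fixes K \<Lambda> :: real and m n t :: nat
  fixes A :: "nat \<Rightarrow> nat \<Rightarrow> real" and Y eta mu0 :: "nat \<Rightarrow> real"
    and Lf :: "nat \<Rightarrow> nat \<Rightarrow> real \<Rightarrow> real \<Rightarrow> real" and Pf :: "nat \<Rightarrow> nat \<Rightarrow> real \<Rightarrow> real"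
  defines "lf \<equiv> gd_lf A m n Y eta Lf Pf mu0" and "pf \<equiv> gd_pf A m n Y eta Lf Pf mu0"
    and "phi \<equiv> real m / real n"
  assumes K: "2 \<le> K" and Lambda: "2 \<le> \<Lambda>" and phi_le: "phi \<le> K"
    and eta: "\<And>s. s < t \<Longrightarrow> 0 < eta s \<and> eta s \<le> \<Lambda>"
    and lip_L: "\<And>s k. s < t \<Longrightarrow> k < m \<Longrightarrow> \<Lambda>-lipschitz_on UNIV (\<lambda>u. d1 (Lf s k) u (Y k))"
    and diff_L: "\<And>s k x. s < t \<Longrightarrow> k < m \<Longrightarrow> (\<lambda>u. d1 (Lf s k) u (Y k)) differentiable (at x)"
    and lip_P: "\<And>s l. s \<in> {1..t} \<Longrightarrow> l < n \<Longrightarrow> \<Lambda>-lipschitz_on UNIV (Pf s l)"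
    and diff_P: "\<And>s l x. s \<in> {1..t} \<Longrightarrow> l < n \<Longrightarrow> Pf s l differentiable (at x)"
  shows "max (op_norm (tau_hat m n phi lf pf t)) (op_norm (rho_hat m n phi lf pf t))
    \<le> (K * \<Lambda>) ^ estimator_exp t"
proof (rule estimators_le_pow)
  have Lambda_le: "\<Lambda> \<le> K * \<Lambda>" and K_le: "K \<le> K * \<Lambda>"
    using K Lambda by (simp_all add: mult_le_cancel_left1 mult_le_cancel_right1)
  show "2 \<le> K * \<Lambda>" using Lambda_le Lambda by linarith
  have "0 \<le> phi" by (simp add: phi_def)
  then show "\<bar>phi\<bar> \<le> K * \<Lambda>" using K_le phi_le by linarith
  show "\<bar>lf k s\<bar> \<le> (K * \<Lambda>)\<^sup>2" if "k < m" "s \<in> {1..t}" for k s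
  proof -
    have "\<bar>lf k s\<bar> \<le> \<Lambda>\<^sup>2"
      unfolding lf_def using that eta lip_L diff_L by (intro abs_gd_lf_le) auto
    also have "\<dots> \<le> (K * \<Lambda>)\<^sup>2"
      using Lambda_le Lambda by (intro power_mono) auto
    finally show ?thesis .
  qed
  show "\<bar>pf l s\<bar> \<le> K * \<Lambda>" if "l < n" "s \<in> {1..t}" for l s
    unfolding pf_def using that lip_P diff_P abs_gd_pf_le Lambda_le
    by (meson order_trans)
qed

theorem lemma7p1:
  fixes t :: nat
  assumes "t \<ge> 1"
  shows "\<exists>c::real. c > 1 \<and>
    (\<forall>(K::real) (\<Lambda>::real) (m::nat) (n::nat) (A::nat \<Rightarrow> nat \<Rightarrow> real)
       (mustar::nat \<Rightarrow> real) (mu0::nat \<Rightarrow> real) (xi::nat \<Rightarrow> real)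
       (F::real \<Rightarrow> real \<Rightarrow> real) (eta::nat \<Rightarrow> real)
       (Lf::nat \<Rightarrow> nat \<Rightarrow> real \<Rightarrow> real \<Rightarrow> real) (Pf::nat \<Rightarrow> nat \<Rightarrow> real \<Rightarrow> real).
      let phi = real m / real n;
          Y = (\<lambda>k. F (matvec A n mustar k) (xi k));
          lf = gd_lf A m n Y eta Lf Pf mu0;
          pf = gd_pf A m n Y eta Lf Pf mu0
      in
      K \<ge> 2 \<longrightarrow> \<Lambda> \<ge> 2 \<longrightarrow> m \<ge> 1 \<longrightarrow> n \<ge> 1 \<longrightarrow>
      (\<lambda>(x, y). F x y) \<in> borel_measurable borel \<longrightarrow>
      \<comment> \<open>(A1)\<close>
      1 / K \<le> phi \<longrightarrow> phi \<le> K \<longrightarrow>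
      \<comment> \<open>step sizes positive, (A3)\<close>
      (\<forall>s. eta s > 0) \<longrightarrow> (\<forall>s<t. eta s \<le> \<Lambda>) \<longrightarrow>
      \<comment> \<open>(A4')\<close>
      (\<forall>s<t. \<forall>l<n. \<bar>Pf (s + 1) l 0\<bar> \<le> \<Lambda> \<and> \<Lambda>-lipschitz_on UNIV (Pf (s + 1) l)) \<longrightarrow>
      \<comment> \<open>(A5')\<close>
      (\<forall>s<t. \<forall>k<m. \<bar>d1 (Lf s k) 0 (F 0 (xi k))\<bar> \<le> \<Lambda> \<and>
          \<Lambda>-lipschitz_on UNIV (\<lambda>(u1, u2). d1 (Lf s k) u1 (F u2 (xi k)))) \<longrightarrow>
      \<comment> \<open>differentiability so that the estimators are defined\<close>
      (\<forall>s<t. \<forall>k<m. \<forall>x y. (\<lambda>u. Lf s k u y) differentiable (at x) \<and>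
          (\<lambda>u. d1 (Lf s k) u y) differentiable (at x)) \<longrightarrow>
      (\<forall>s\<in>{1..t}. \<forall>l<n. \<forall>x. Pf s l differentiable (at x)) \<longrightarrow>
      max (op_norm (tau_hat m n phi lf pf t)) (op_norm (rho_hat m n phi lf pf t))
        \<le> (K * \<Lambda>) powr c)"
  unfolding Let_def
  apply (rule exI[of _ "real (estimator_exp t)"])
  apply (intro conjI allI impI)
  subgoal using assms by (simp add: estimator_exp_def)
  subgoal premises hyps for K \<Lambda> m n A mustar mu0 xi F eta Lf Pf
  proof -
    let ?Y = "\<lambda>k. F (matvec A n mustar k) (xi k)"
    have lip_L: "\<Lambda>-lipschitz_on UNIV (\<lambda>u. d1 (Lf s k) u (?Y k))" if "s < t" "k < m" for s k
      using lipschitz_on_Pair_slice[of \<Lambda> "\<lambda>(u1, u2). d1 (Lf s k) u1 (F u2 (xi k))"] hyps(11) that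
      by simp
    have lip_P: "\<Lambda>-lipschitz_on UNIV (Pf s l)" if "s \<in> {1..t}" "l < n" for s l
    proof -
      have "s - 1 < t" "s - 1 + 1 = s" using that(1) by auto
      then show ?thesis using hyps(10) that(2) by metis
    qed
    have "0 < K * \<Lambda>" using hyps(1,2) by simp
    show ?thesis
      unfolding powr_realpow[OF \<open>0 < K * \<Lambda>\<close>]
      by (rule gd_estimators_le[OF hyps(1,2,7)]; use hyps(8,9,12,13) lip_L lip_P in blast)
  qed
  done

end
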